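(* Let $\alpha$ be a positive quadratic irrational and $A_1,A_2\in GL(2,\mathbb Z)$. If $\pi(A_1)$ and $\pi(A_2)$ restrict to isometric automorphisms of $\mathcal A_\alpha$, then $A_1A_2=A_2A_1$.
   Context: For $f\in C(\mathbb T^2)$ (with $\mathbb T$ the unit circle), the Fourier transform is $\hat f(m,n)=\int_{\mathbb T^2} f(e^{is},e^{it})e^{-i(ms+nt)}\,d\mu$, $\mu$ normalized Lebesgue measure. For a positive irrational $\alpha$, $\mathcal A_\alpha=\{f\in C(\mathbb T^2): \hat f(m,n)=0 \text{ whenever } m+\alpha n<0\}$, a uniform algebra with the sup norm on $\mathbb T^2$. For $A=\begin{bmatrix} a&b\\ c&d\end{bmatrix}\in GL(2,\mathbb Z)$, $\pi(A):C(\mathbb T^2)\to C(\mathbb T^2)$ is $\pi(A)(f)=f\circ\varphi$ with $\varphi(z,w)=(z^aw^b,z^cw^d)$. *)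

theory Defs
  imports "HOL-Analysis.Analysis"
begin

text \<open>Elements of C(T^2) are represented as
  functions on C x C that are continuous on the torus and vanish off it
  (so that they are determined by their restriction to the torus).\<close>

definition torus :: "(complex \<times> complex) set" where
  "torus = {(z, w). cmod z = 1 \<and> cmod w = 1}"

definition CT2 :: "(complex \<times> complex \<Rightarrow> complex) set" where
  "CT2 = {f. continuous_on torus f \<and> (\<forall>p. p \<notin> torus \<longrightarrow> f p = 0)}"

definition fourier :: "(complex \<times> complex \<Rightarrow> complex) \<Rightarrow> int \<Rightarrow> int \<Rightarrow> complex" where
  "fourier f m n = integral (cbox (0, 0) (2 * pi, 2 * pi))
      (\<lambda>(s, t). f (cis s, cis t) * cis (- (of_int m * s + of_int n * t))) / (4 * pi\<^sup>2)"

definition A_alpha :: "real \<Rightarrow> (complex \<times> complex \<Rightarrow> complex) set" where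
  "A_alpha \<alpha> = {f \<in> CT2. \<forall>m n. of_int m + \<alpha> * of_int n < 0 \<longrightarrow> fourier f m n = 0}"

definition supnorm :: "(complex \<times> complex \<Rightarrow> complex) \<Rightarrow> real" where
  "supnorm f = Sup ((\<lambda>p. cmod (f p)) ` torus)"

definition GL2Z :: "(int^2^2) set" where
  "GL2Z = {A. \<bar>det A\<bar> = 1}"

text \<open>phi(z,w) = (z^a w^b, z^c w^d) for A = [[a,b],[c,d]].\<close>
definition torus_map :: "int^2^2 \<Rightarrow> complex \<times> complex \<Rightarrow> complex \<times> complex" where
  "torus_map A = (\<lambda>(z, w). (z powi (A$1$1) * w powi (A$1$2), z powi (A$2$1) * w powi (A$2$2)))"

definition piA :: "int^2^2 \<Rightarrow> (complex \<times> complex \<Rightarrow> complex) \<Rightarrow> (complex \<times> complex \<Rightarrow> complex)" where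
  "piA A f = (\<lambda>p. if p \<in> torus then f (torus_map A p) else 0)"

definition isometric_automorphism :: "real \<Rightarrow> int^2^2 \<Rightarrow> bool" where
  "isometric_automorphism \<alpha> A \<longleftrightarrow>
     bij_betw (piA A) (A_alpha \<alpha>) (A_alpha \<alpha>) \<and>
     (\<forall>f \<in> A_alpha \<alpha>. supnorm (piA A f) = supnorm f)"

definition quadratic_irrational :: "real \<Rightarrow> bool" where
  "quadratic_irrational x \<longleftrightarrow> x \<notin> \<rat> \<and>
     (\<exists>a b c :: int. a \<noteq> 0 \<and> of_int a * x\<^sup>2 + of_int b * x + of_int c = 0)"

end

theory Submission
  imports Defs "HOL-Analysis.Kronecker_Approximation_Theorem"
begin

text \<open>Applied to the character \<open>z\<^sup>p w\<^sup>q\<close>, \<open>\<pi>(A)\<close> yields the character whose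
  exponent is \<open>A\<^sup>T (p, q)\<close>.  Since characters lie in \<open>\<A>\<^sub>\<alpha>\<close> exactly when
  \<open>p + \<alpha> q \<ge> 0\<close>, invariance of \<open>\<A>\<^sub>\<alpha>\<close> means that \<open>A\<^sup>T\<close> maps the lattice half-plane
  \<open>p + \<alpha> q \<ge> 0\<close> into itself.  As \<open>\<alpha>\<close> is irrational, lattice points come arbitrarily
  close to the boundary line on both sides, which forces \<open>A\<^sup>T\<close> to preserve that line,
  i.e. \<open>(1, \<alpha>)\<close> is an eigenvector of \<open>A\<close>.  The commutator of two integer matrices
  with this common eigenvector is an integer matrix killing \<open>(1, \<alpha>)\<close>, hence zero.\<close>

lemma integral_cis_int_multiple:
  fixes k :: int
  shows "integral {0..2*pi} (\<lambda>s. cis (of_int k * s)) = (if k = 0 then 2*pi else 0)"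
proof (cases "k = 0")
  case True
  then show ?thesis by (simp add: scaleR_conv_of_real)
next
  case False
  have "integral {0..2*pi} (\<lambda>s. exp ((\<i> * of_int k) * complex_of_real s))
      = (exp ((\<i> * of_int k) * of_real (2*pi)) - 1) / (\<i> * of_int k)"
    by (rule integral_exp) (use False in auto)
  moreover have "exp ((\<i> * of_int k) * of_real (2*pi)) = cis (2 * pi * real_of_int k)"
    by (simp add: cis_conv_exp mult_ac)
  moreover have "cis (2 * pi * real_of_int k) = 1"
    by (rule cis_multiple_2pi) simp
  ultimately show ?thesis
    using False by (simp add: cis_conv_exp mult_ac)
qed

definition torus_char :: "int \<Rightarrow> int \<Rightarrow> complex \<times> complex \<Rightarrow> complex" where
  "torus_char p q = (\<lambda>(z, w). if (z, w) \<in> torus then z powi p * w powi q else 0)"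

lemma fourier_torus_char: "fourier (torus_char p q) m n = (if p = m \<and> q = n then 1 else 0)"
proof -
  let ?k = "p - m" and ?l = "q - n"
  let ?g = "\<lambda>x::real \<times> real. cis (of_int ?k * fst x) * cis (of_int ?l * snd x)"
  have integrand: "(\<lambda>(s, t). torus_char p q (cis s, cis t) * cis (- (of_int m * s + of_int n * t))) = ?g"
    by (rule ext, clarsimp simp: torus_char_def torus_def cis_power_int cis_mult[symmetric])
       (simp add: cis_mult algebra_simps)
  have "continuous_on (cbox (0, 0) (2 * pi, 2 * pi)) ?g"
    by (intro continuous_intros)
  then have "integral (cbox (0, 0) (2 * pi, 2 * pi)) ?g
      = integral {0..2*pi} (\<lambda>s. cis (of_int ?k * s) * integral {0..2*pi} (\<lambda>t. cis (of_int ?l * t)))"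
    by (simp add: integral_prod_continuous)
  also have "\<dots> = integral {0..2*pi} (\<lambda>s. cis (of_int ?k * s)) * integral {0..2*pi} (\<lambda>t. cis (of_int ?l * t))"
    by simp
  also have "\<dots> = (if ?k = 0 then 2*pi else 0) * (if ?l = 0 then 2*pi else 0)"
    by (simp only: integral_cis_int_multiple of_real_mult)
  finally show ?thesis
    unfolding fourier_def integrand by (auto simp: power2_eq_square)
qed

lemma torus_char_in_CT2: "torus_char p q \<in> CT2"
proof -
  have "continuous_on torus (\<lambda>x. fst x powi p * snd x powi q)"
    by (intro continuous_intros) (auto simp: torus_def)
  then have "continuous_on torus (torus_char p q)"
    by (rule continuous_on_cong[THEN iffD1, rotated 2]) (auto simp: torus_char_def)
  then show ?thesis
    by (auto simp: CT2_def torus_char_def)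
qed

lemma torus_char_in_A_alpha_iff: "torus_char p q \<in> A_alpha \<alpha> \<longleftrightarrow> of_int p + \<alpha> * of_int q \<ge> 0"
  by (auto simp: A_alpha_def torus_char_in_CT2 fourier_torus_char)

lemma torus_map_in_torus: "x \<in> torus \<Longrightarrow> torus_map A x \<in> torus"
  by (auto simp: torus_def torus_map_def norm_mult norm_power_int)

lemma piA_torus_char:
  "piA A (torus_char p q) = torus_char (A$1$1 * p + A$2$1 * q) (A$1$2 * p + A$2$2 * q)"
proof
  fix x :: "complex \<times> complex"
  show "piA A (torus_char p q) x = torus_char (A$1$1 * p + A$2$1 * q) (A$1$2 * p + A$2$2 * q) x"
  proof (cases "x \<in> torus")
    case True
    obtain z w where x: "x = (z, w)" by fastforce
    with True have "z \<noteq> 0" "w \<noteq> 0" by (auto simp: torus_def)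
    with True torus_map_in_torus[OF True, of A] show ?thesis
      by (simp add: piA_def torus_char_def x torus_map_def power_int_mult_distrib
          power_int_mult[symmetric] power_int_add mult_ac)
  qed (auto simp: piA_def torus_char_def split: prod.splits)
qed

lemma halfplane_invariant_if_piA_preserves_A_alpha:
  assumes "piA A ` A_alpha \<alpha> \<subseteq> A_alpha \<alpha>" and "of_int p + \<alpha> * of_int q \<ge> 0"
  shows "of_int (A$1$1 * p + A$2$1 * q) + \<alpha> * of_int (A$1$2 * p + A$2$2 * q) \<ge> 0"
proof -
  have "piA A (torus_char p q) \<in> A_alpha \<alpha>"
    using assms by (auto simp: torus_char_in_A_alpha_iff)
  then show ?thesis
    by (simp add: piA_torus_char torus_char_in_A_alpha_iff)
qed

lemma irrational_int_combination_in_interval: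
  fixes \<alpha> e :: real
  assumes "\<alpha> \<notin> \<rat>" and "e > 0"
  obtains p q :: int where "q \<ge> 1" "0 < of_int p + \<alpha> * of_int q" "of_int p + \<alpha> * of_int q < e"
proof -
  obtain h k :: int where k: "k > 0" "\<bar>of_int k * \<alpha> - of_int h - e/2\<bar> < e/2"
    using sequence_of_fractional_parts_is_dense[OF assms(1) half_gt_zero[OF assms(2)]] by blast
  then have "0 < of_int k * \<alpha> - of_int h" "of_int k * \<alpha> - of_int h < e"
    by (auto simp only: abs_less_iff)
  then show ?thesis
    using k(1) by (intro that[of k "-h"]) (auto simp: algebra_simps)
qed

lemma proportional_if_nonneg_on_int_halfplane:
  fixes \<alpha> x y :: real
  assumes irrational: "\<alpha> \<notin> \<rat>"
    and nonneg: "\<And>p q :: int. of_int p + \<alpha> * of_int q \<ge> 0 \<Longrightarrow> x * of_int p + y * of_int q \<ge> 0"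
  shows "y = \<alpha> * x"
proof -
  define D where "D = y - \<alpha> * x"
  have x_nonneg: "x \<ge> 0"
    using nonneg[of 1 0] by simp
  have near_boundary: "D * of_int q \<ge> - (x * e)"
    if "0 < of_int p + \<alpha> * of_int q" "of_int p + \<alpha> * of_int q < e" for p q :: int and e :: real
  proof -
    have "x * (of_int p + \<alpha> * of_int q) + D * of_int q \<ge> 0"
      using nonneg[of p q] that by (simp add: D_def algebra_simps)
    moreover have "x * (of_int p + \<alpha> * of_int q) \<le> x * e"
      using that x_nonneg by (simp add: mult_left_mono)
    ultimately show ?thesis by linarith
  qed
  have abs_D_bound: "\<bar>D\<bar> \<le> x * e" if "e > 0" for e
  proof -
    have xe_nonneg: "x * e \<ge> 0"
      using x_nonneg \<open>e > 0\<close> by simp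
    obtain p q :: int where "q \<ge> 1" "0 < of_int p + \<alpha> * of_int q" "of_int p + \<alpha> * of_int q < e"
      using irrational_int_combination_in_interval[OF irrational \<open>e > 0\<close>] .
    then have "D * of_int q \<ge> - (x * e)" "of_int q \<ge> (1::real)"
      using near_boundary by auto
    moreover have "D * of_int q \<le> D \<or> D \<ge> 0"
      using \<open>of_int q \<ge> (1::real)\<close> by (auto simp: mult_le_cancel_left1)
    ultimately have lower: "D \<ge> - (x * e)"
      using xe_nonneg by linarith
    have "- \<alpha> \<notin> \<rat>"
      using irrational by (simp add: Rats_minus_iff)
    then obtain p' q' :: int
      where "q' \<ge> 1" "0 < of_int p' + - \<alpha> * of_int q'" "of_int p' + - \<alpha> * of_int q' < e"
      using \<open>e > 0\<close> by (rule irrational_int_combination_in_interval)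
    then have "D * of_int q' \<le> x * e" "of_int q' \<ge> (1::real)"
      using near_boundary[of p' "- q'"] by auto
    moreover have "D \<le> D * of_int q' \<or> D \<le> 0"
      using \<open>of_int q' \<ge> (1::real)\<close> by (auto simp: mult_le_cancel_left1)
    ultimately have upper: "D \<le> x * e"
      using xe_nonneg by linarith
    from lower upper show ?thesis by simp
  qed
  have "\<bar>D\<bar> \<le> 0 + e" if "e > 0" for e
  proof -
    have "e / (x + 1) > 0"
      using that x_nonneg by simp
    then have "\<bar>D\<bar> \<le> x * (e / (x + 1))"
      by (rule abs_D_bound)
    also have "\<dots> \<le> e"
      using that x_nonneg by (simp add: field_simps)
    finally show ?thesis by simp
  qed
  then have "D = 0"
    using field_le_epsilon[of "\<bar>D\<bar>" 0] by simp
  then show ?thesis by (simp add: D_def)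
qed

lemma eigenvector_if_piA_preserves_A_alpha:
  assumes "\<alpha> \<notin> \<rat>" and "piA A ` A_alpha \<alpha> \<subseteq> A_alpha \<alpha>"
  shows "map_matrix of_int A *v vector [1, \<alpha>]
    = (of_int (A$1$1) + \<alpha> * of_int (A$1$2)) *s vector [1, \<alpha>]"
proof -
  have "of_int (A$2$1) + \<alpha> * of_int (A$2$2) = \<alpha> * (of_int (A$1$1) + \<alpha> * of_int (A$1$2))"
  proof (rule proportional_if_nonneg_on_int_halfplane[OF assms(1)])
    fix p q :: int
    assume "of_int p + \<alpha> * of_int q \<ge> 0"
    from halfplane_invariant_if_piA_preserves_A_alpha[OF assms(2) this]
    show "(of_int (A$1$1) + \<alpha> * of_int (A$1$2)) * of_int p
        + (of_int (A$2$1) + \<alpha> * of_int (A$2$2)) * of_int q \<ge> 0"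
      by (simp add: algebra_simps)
  qed
  then show ?thesis
    by (simp add: vec_eq_iff forall_2 matrix_vector_mult_def sum_2 algebra_simps)
qed

lemma map_matrix_of_int_mult:
  "map_matrix of_int (A ** B) = (map_matrix of_int A ** map_matrix of_int B :: 'a::ring_1^_^_)"
  by (simp add: vec_eq_iff matrix_matrix_mult_def)

lemma map_matrix_of_int_diff:
  "map_matrix of_int (A - B) = (map_matrix of_int A - map_matrix of_int B :: 'a::ring_1^_^_)"
  by (simp add: vec_eq_iff)

lemma commutator_kills_common_eigenvector:
  fixes A B :: "'a::field^'n^'n"
  assumes "A *v v = a *s v" and "B *v v = b *s v"
  shows "(A ** B - B ** A) *v v = 0"
  by (simp add: matrix_vector_mult_diff_rdistrib matrix_vector_mul_assoc[symmetric] assms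
      vector_scalar_commute mult.commute)

lemma int_matrix_eq_0_if_kills_irrational_vector:
  fixes N :: "int^2^'m"
  assumes "\<alpha> \<notin> \<rat>" and "map_matrix of_int N *v vector [1, \<alpha>] = (0 :: real^'m)"
  shows "N = 0"
proof -
  have "N$i$1 = 0 \<and> N$i$2 = 0" for i
  proof -
    have "of_int (N$i$1) + \<alpha> * of_int (N$i$2) = 0"
      using assms(2) by (simp add: vec_eq_iff matrix_vector_mult_def sum_2 mult.commute)
    then have "\<alpha> * of_int (N$i$2) \<in> \<rat>"
      by (metis Rats_minus_iff Rats_of_int add_eq_0_iff)
    then have "N$i$2 = 0"
      using assms(1) by (metis Rats_divide Rats_of_int nonzero_mult_div_cancel_right of_int_0_eq_iff)
    with \<open>of_int (N$i$1) + \<alpha> * of_int (N$i$2) = 0\<close> show ?thesis by simp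
  qed
  then show ?thesis
    by (simp add: vec_eq_iff forall_2)
qed

theorem mainTheorem10:
  fixes \<alpha> :: real and A1 A2 :: "int^2^2"
  assumes "\<alpha> > 0" and "quadratic_irrational \<alpha>"
    and "A1 \<in> GL2Z" and "A2 \<in> GL2Z"
    and "isometric_automorphism \<alpha> A1" and "isometric_automorphism \<alpha> A2"
  shows "A1 ** A2 = A2 ** A1"
proof -
  have irrational: "\<alpha> \<notin> \<rat>"
    using assms(2) by (simp add: quadratic_irrational_def)
  have "piA A1 ` A_alpha \<alpha> \<subseteq> A_alpha \<alpha>" "piA A2 ` A_alpha \<alpha> \<subseteq> A_alpha \<alpha>"
    using assms(5,6) by (simp_all add: isometric_automorphism_def bij_betw_def)
  then have "map_matrix of_int (A1 ** A2 - A2 ** A1) *v vector [1, \<alpha>] = (0 :: real^2)"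
    unfolding map_matrix_of_int_diff map_matrix_of_int_mult
    by (rule commutator_kills_common_eigenvector[OF
          eigenvector_if_piA_preserves_A_alpha[OF irrational]
          eigenvector_if_piA_preserves_A_alpha[OF irrational]])
  then have "A1 ** A2 - A2 ** A1 = 0"
    by (rule int_matrix_eq_0_if_kills_irrational_vector[OF irrational])
  then show ?thesis
    by simp
qed

end
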